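(* Let $\alpha\in[0,1]$, $m\ge1$, $n_1,n_2\ge3$, and let $H_1$ be a graph on $n-n_1-n_2$ vertices. Let $H'=C_{n_1}\cup C_{n_2}\cup H_1$ and $H''=C_{n_1+n_2}\cup H_1$. Then $\lambda_1(A_\alpha(K_m\vee H'))=\lambda_1(A_\alpha(K_m\vee H''))$.
   Context: All graphs are finite, simple and undirected. $A_\alpha(G)=\alpha D(G)+(1-\alpha)A(G)$ with $A(G)$ the adjacency and $D(G)$ the degree matrix; $\lambda_1$ denotes the largest eigenvalue. $C_k$ is the cycle on $k$ vertices, $\cup$ disjoint union, $K_m$ the complete graph, and $\vee$ the join (disjoint union plus all edges between the two vertex sets). *)

theory Defs
  imports "Jordan_Normal_Form.Char_Poly"
begin

text \<open>A finite simple graph is represented by its number of vertices N, the vertex set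
  being {0..<N}, together with an adjacency predicate E.\<close>

type_synonym graph = "nat \<times> (nat \<Rightarrow> nat \<Rightarrow> bool)"

definition nverts :: "graph \<Rightarrow> nat" where "nverts G = fst G"
definition adj :: "graph \<Rightarrow> nat \<Rightarrow> nat \<Rightarrow> bool" where "adj G = snd G"

definition simple_graph :: "graph \<Rightarrow> bool" where
  "simple_graph G \<longleftrightarrow> (\<forall>i j. adj G i j \<longrightarrow> i < nverts G \<and> j < nverts G \<and> i \<noteq> j \<and> adj G j i)"

definition cycle_graph :: "nat \<Rightarrow> graph" where
  "cycle_graph k = (k, \<lambda>i j. i < k \<and> j < k \<and> i \<noteq> j \<and> (j = (i + 1) mod k \<or> i = (j + 1) mod k))"

definition complete_graph :: "nat \<Rightarrow> graph" where
  "complete_graph m = (m, \<lambda>i j. i < m \<and> j < m \<and> i \<noteq> j)"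

definition disj_union :: "graph \<Rightarrow> graph \<Rightarrow> graph" where
  "disj_union G H = (nverts G + nverts H, \<lambda>i j.
     (i < nverts G \<and> j < nverts G \<and> adj G i j) \<or>
     (nverts G \<le> i \<and> nverts G \<le> j \<and> adj H (i - nverts G) (j - nverts G)))"

definition graph_join :: "graph \<Rightarrow> graph \<Rightarrow> graph" where
  "graph_join G H = (nverts G + nverts H, \<lambda>i j.
     adj (disj_union G H) i j \<or>
     (i < nverts G \<and> nverts G \<le> j \<and> j < nverts G + nverts H) \<or>
     (j < nverts G \<and> nverts G \<le> i \<and> i < nverts G + nverts H))"

definition degree :: "graph \<Rightarrow> nat \<Rightarrow> nat" where
  "degree G i = card {j. j < nverts G \<and> adj G i j}"

definition A_alpha :: "real \<Rightarrow> graph \<Rightarrow> real mat" where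
  "A_alpha \<alpha> G = mat (nverts G) (nverts G) (\<lambda>(i, j).
     (if i = j then \<alpha> * real (degree G i) else 0) + (1 - \<alpha>) * (if adj G i j then 1 else 0))"

definition lambda1 :: "real mat \<Rightarrow> real" where
  "lambda1 M = Max {x. eigenvalue M x}"

end

theory Submission
  imports Defs "HOL-Analysis.Analysis"
begin

text \<open>The vertices of the 2-regular part (C_n1 \<union> C_n2, resp. C_(n1+n2)) form a block S on which
  both matrices have constant row sum t = \<alpha> (m + 2) + 2 (1 - \<alpha>); the two matrices agree off
  S \<times> S, and every other vertex is adjacent to all of S or to none of it. Hence a vector that is
  constant on S is an eigenvector of one matrix iff it is one of the other, for the same eigenvalue.
  A vertex of K_m sees S, which pushes the Rayleigh quotient, and so the largest eigenvalue, above t;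
  and for an eigenvalue above t, averaging an eigenvector over S still gives a nonzero eigenvector.
  So both largest eigenvalues have eigenvectors constant on S, and they coincide. Only the
  d-regularity of the two parts and their common order matter.\<close>

section \<open>Rayleigh quotients\<close>

definition bilin :: "(nat \<Rightarrow> nat \<Rightarrow> real) \<Rightarrow> nat \<Rightarrow> (nat \<Rightarrow> real) \<Rightarrow> (nat \<Rightarrow> real) \<Rightarrow> real" where
  "bilin a N f g = (\<Sum>i<N. \<Sum>j<N. f i * a i j * g j)"

definition sqnorm :: "nat \<Rightarrow> (nat \<Rightarrow> real) \<Rightarrow> real" where
  "sqnorm N f = (\<Sum>i<N. (f i)\<^sup>2)"

definition eigvec :: "(nat \<Rightarrow> nat \<Rightarrow> real) \<Rightarrow> nat \<Rightarrow> real \<Rightarrow> (nat \<Rightarrow> real) \<Rightarrow> bool" where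
  "eigvec a N x v \<longleftrightarrow> (\<exists>i<N. v i \<noteq> 0) \<and> (\<forall>i<N. (\<Sum>j<N. a i j * v j) = x * v i)"

definition eigvals :: "(nat \<Rightarrow> nat \<Rightarrow> real) \<Rightarrow> nat \<Rightarrow> real set" where
  "eigvals a N = {x. \<exists>v. eigvec a N x v}"

lemma nonneg_eq_0_if_quadratic_le_0:
  fixes r c :: real
  assumes le: "\<And>z. 2 * z * r + z\<^sup>2 * c \<le> 0" and "0 \<le> r"
  shows "r = 0"
proof (rule ccontr)
  assume "r \<noteq> 0"
  with \<open>0 \<le> r\<close> have "0 < r" by simp
  define z where "z = r / (\<bar>c\<bar> + 1)"
  have "0 < z" using \<open>0 < r\<close> by (simp add: z_def add_pos_nonneg)
  have "z * \<bar>c\<bar> < r" using \<open>0 < r\<close> by (simp add: z_def field_simps)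
  then have "z\<^sup>2 * \<bar>c\<bar> < z * r" using \<open>0 < z\<close> by (simp add: power2_eq_square mult.assoc)
  moreover have "- (z\<^sup>2 * \<bar>c\<bar>) \<le> z\<^sup>2 * c" using mult_left_mono[of "- \<bar>c\<bar>" c "z\<^sup>2"] by simp
  moreover have "0 < z * r" using \<open>0 < z\<close> \<open>0 < r\<close> by simp
  ultimately have "0 < 2 * z * r + z\<^sup>2 * c" by linarith
  with le[of z] show False by simp
qed

lemma sqnorm_nonneg: "0 \<le> sqnorm N f"
  unfolding sqnorm_def by (simp add: sum_nonneg)

lemma sqnorm_eq_0_iff: "sqnorm N f = 0 \<longleftrightarrow> (\<forall>i<N. f i = 0)"
  unfolding sqnorm_def by (auto simp: sum_nonneg_eq_0_iff)

lemma square_le_sqnorm: "i < N \<Longrightarrow> (f i)\<^sup>2 \<le> sqnorm N f"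
  unfolding sqnorm_def by (rule member_le_sum) auto

lemma bilin_eq_0: "\<forall>i<N. f i = 0 \<Longrightarrow> bilin a N f g = 0"
  unfolding bilin_def by simp

lemma bilin_restrict: "bilin a N (\<lambda>i. if i < N then f i else 0) (\<lambda>i. if i < N then f i else 0) = bilin a N f f"
  unfolding bilin_def by (intro sum.cong) auto

lemma sqnorm_restrict: "sqnorm N (\<lambda>i. if i < N then f i else 0) = sqnorm N f"
  unfolding sqnorm_def by (intro sum.cong) auto

lemma bilin_add_scaled:
  "bilin a N (\<lambda>i. f i + z * g i) (\<lambda>i. f i + z * g i) =
     bilin a N f f + z * bilin a N f g + z * bilin a N g f + z\<^sup>2 * bilin a N g g"
  unfolding bilin_def by (simp add: algebra_simps sum.distrib sum_distrib_left power2_eq_square)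

lemma sqnorm_add_scaled:
  "sqnorm N (\<lambda>i. f i + z * g i) = sqnorm N f + 2 * z * (\<Sum>i<N. f i * g i) + z\<^sup>2 * sqnorm N g"
  unfolding sqnorm_def by (simp add: algebra_simps sum.distrib sum_distrib_left power2_eq_square)

lemma bilin_scaled: "bilin a N (\<lambda>i. c * f i) (\<lambda>i. c * f i) = c\<^sup>2 * bilin a N f f"
  unfolding bilin_def by (simp add: algebra_simps sum_distrib_left power2_eq_square)

lemma sqnorm_scaled: "sqnorm N (\<lambda>i. c * f i) = c\<^sup>2 * sqnorm N f"
  unfolding sqnorm_def by (simp add: algebra_simps sum_distrib_left power2_eq_square)

lemma bilin_commute:
  assumes "\<And>i j. i < N \<Longrightarrow> j < N \<Longrightarrow> a i j = a j i"
  shows "bilin a N f g = bilin a N g f"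
proof -
  have "bilin a N f g = (\<Sum>j<N. \<Sum>i<N. f i * a i j * g j)"
    unfolding bilin_def by (rule sum.swap)
  also have "\<dots> = bilin a N g f"
    unfolding bilin_def by (intro sum.cong refl) (simp add: assms mult.commute)
  finally show ?thesis .
qed

lemma continuous_on_coordinate [continuous_intros]:
  "continuous_on S (\<lambda>f :: nat \<Rightarrow> real. f i)"
  by (rule continuous_on_subset[OF continuous_on_product_coordinates]) simp

text \<open>Vectors are functions vanishing from N on, so the unit sphere is a closed subset
  of the compact product of the intervals [-1,1] for i < N and {0} otherwise.\<close>
lemma bilin_attains_max_on_unit_sphere:
  assumes "0 < N"
  obtains x where "sqnorm N x = 1" "\<And>f. bilin a N f f \<le> bilin a N x x * sqnorm N f"
proof -
  define B where "B = (\<lambda>i::nat. if i < N then {-1..1::real} else {0})"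
  define K where "K = PiE UNIV B \<inter> {f. sqnorm N f = 1}"
  have "compact K"
  proof -
    have "compactin (product_topology (\<lambda>_. euclidean) UNIV) (PiE UNIV B)"
      by (subst compactin_PiE) (auto simp: B_def)
    then have "compact (PiE UNIV B)" by (simp add: euclidean_product_topology)
    moreover have "closed {f :: nat \<Rightarrow> real. sqnorm N f = 1}"
      unfolding sqnorm_def by (intro closed_Collect_eq continuous_intros)
    ultimately show ?thesis unfolding K_def by (rule compact_Int_closed)
  qed
  have unit_in_K: "f \<in> K" if "sqnorm N f = 1" "\<forall>i\<ge>N. f i = 0" for f
  proof -
    have "f i \<in> B i" for i
    proof (cases "i < N")
      case True
      have "(f i)\<^sup>2 \<le> 1" using square_le_sqnorm[OF True, of f] that(1) by simp
      then show ?thesis using True by (simp add: B_def abs_square_le_1 abs_le_iff)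
    qed (use that in \<open>simp add: B_def\<close>)
    then show ?thesis using that(1) by (simp add: K_def PiE_iff)
  qed
  have "(\<lambda>i. of_bool (i = 0)) \<in> K"
    using \<open>0 < N\<close> by (intro unit_in_K) (simp_all add: sqnorm_def power2_eq_square)
  then have "K \<noteq> {}" by auto
  moreover have "continuous_on K (\<lambda>f. bilin a N f f)"
    unfolding bilin_def by (intro continuous_intros)
  ultimately obtain x where "x \<in> K" and x_max: "\<And>f. f \<in> K \<Longrightarrow> bilin a N f f \<le> bilin a N x x"
    using continuous_attains_sup[OF \<open>compact K\<close>] by blast
  have "bilin a N f f \<le> bilin a N x x * sqnorm N f" for f
  proof (cases "sqnorm N f = 0")
    case True
    then show ?thesis using sqnorm_eq_0_iff[of N f] by (simp add: bilin_eq_0)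
  next
    case False
    then have "0 < sqnorm N f" using sqnorm_nonneg[of N f] by linarith
    define c where "c = 1 / sqrt (sqnorm N f)"
    have c2: "c\<^sup>2 = 1 / sqnorm N f" using \<open>0 < sqnorm N f\<close> by (simp add: c_def power_divide)
    define g where "g = (\<lambda>i. c * (if i < N then f i else 0))"
    have "sqnorm N g = 1"
      using \<open>0 < sqnorm N f\<close> by (simp add: g_def sqnorm_scaled sqnorm_restrict c2)
    then have "bilin a N g g \<le> bilin a N x x" by (intro x_max unit_in_K) (auto simp: g_def)
    then have "bilin a N f f / sqnorm N f \<le> bilin a N x x"
      by (simp add: g_def bilin_scaled bilin_restrict c2)
    then show ?thesis using \<open>0 < sqnorm N f\<close> by (simp add: divide_le_eq)
  qed
  moreover have "sqnorm N x = 1" using \<open>x \<in> K\<close> by (simp add: K_def)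
  ultimately show ?thesis using that by blast
qed

text \<open>First variation: perturbing x by z times the residual y = A x - l x changes the Rayleigh
  inequality by 2 z |y|^2 + O(z^2), which forces y = 0.\<close>
lemma rayleigh_maximizer_is_eigvec:
  assumes sym: "\<And>i j. i < N \<Longrightarrow> j < N \<Longrightarrow> a i j = a j i"
    and unit: "sqnorm N x = 1"
    and max: "\<And>f. bilin a N f f \<le> bilin a N x x * sqnorm N f"
  shows "eigvec a N (bilin a N x x) x"
proof -
  define l where "l = bilin a N x x"
  define y where "y = (\<lambda>i. (\<Sum>j<N. a i j * x j) - l * x i)"
  have "bilin a N y x = (\<Sum>i<N. y i * (\<Sum>j<N. a i j * x j))"
    unfolding bilin_def by (simp add: sum_distrib_left mult.assoc)
  then have residual: "bilin a N y x - l * (\<Sum>i<N. x i * y i) = sqnorm N y"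
    unfolding sqnorm_def y_def
    by (simp add: sum_distrib_left sum_subtractf[symmetric] power2_eq_square algebra_simps)
  have "2 * z * sqnorm N y + z\<^sup>2 * (bilin a N y y - l * sqnorm N y) \<le> 0" for z
    using max[of "\<lambda>i. x i + z * y i"] residual unit bilin_commute[OF sym, where f=x and g=y]
    unfolding bilin_add_scaled sqnorm_add_scaled l_def[symmetric] by (simp add: algebra_simps)
  then have "sqnorm N y = 0" by (rule nonneg_eq_0_if_quadratic_le_0[OF _ sqnorm_nonneg])
  moreover have "\<exists>i<N. x i \<noteq> 0" using unit sqnorm_eq_0_iff[of N x] by auto
  ultimately show ?thesis unfolding eigvec_def l_def y_def sqnorm_eq_0_iff by simp
qed

lemma eigval_above_if_rayleigh_above:
  assumes sym: "\<And>i j. i < N \<Longrightarrow> j < N \<Longrightarrow> a i j = a j i"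
    and above: "t * sqnorm N u < bilin a N u u"
  shows "\<exists>x>t. x \<in> eigvals a N"
proof -
  have "sqnorm N u \<noteq> 0"
  proof
    assume "sqnorm N u = 0"
    then have "bilin a N u u = 0" by (simp add: sqnorm_eq_0_iff bilin_eq_0)
    with above \<open>sqnorm N u = 0\<close> show False by simp
  qed
  then have "0 < sqnorm N u" using sqnorm_nonneg[of N u] by linarith
  then have "0 < N" by (cases N) (simp_all add: sqnorm_def)
  then obtain x where unit: "sqnorm N x = 1"
    and max: "\<And>f. bilin a N f f \<le> bilin a N x x * sqnorm N f"
    using bilin_attains_max_on_unit_sphere by blast
  have "t * sqnorm N u < bilin a N x x * sqnorm N u"
    using above max[of u] by linarith
  then have "t < bilin a N x x" using \<open>0 < sqnorm N u\<close> by simp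
  moreover have "bilin a N x x \<in> eigvals a N"
    using rayleigh_maximizer_is_eigvec[OF sym unit max] by (auto simp: eigvals_def)
  ultimately show ?thesis by blast
qed

section \<open>Equitable blocks\<close>

definition block_avg :: "nat set \<Rightarrow> (nat \<Rightarrow> real) \<Rightarrow> nat \<Rightarrow> real" where
  "block_avg S v i = (if i \<in> S then (\<Sum>j\<in>S. v j) / card S else v i)"

text \<open>S together with the singletons outside it forms an equitable partition.\<close>
locale equitable_block =
  fixes a :: "nat \<Rightarrow> nat \<Rightarrow> real" and N :: nat and S :: "nat set" and t :: real
  assumes entries_sym: "\<And>i j. i < N \<Longrightarrow> j < N \<Longrightarrow> a i j = a j i"
    and nonneg: "\<And>i j. i < N \<Longrightarrow> j < N \<Longrightarrow> 0 \<le> a i j"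
    and block_subset: "S \<subseteq> {..<N}"
    and block_nonempty: "S \<noteq> {}"
    and block_row_sum: "\<And>i. i \<in> S \<Longrightarrow> (\<Sum>j\<in>S. a i j) = t"
    and uniform_off_block: "\<And>i j j'. i < N \<Longrightarrow> i \<notin> S \<Longrightarrow> j \<in> S \<Longrightarrow> j' \<in> S \<Longrightarrow> a i j = a i j'"
begin

lemma finite_block: "finite S"
  using block_subset finite_subset by blast

lemma card_block_pos: "0 < card S"
  using finite_block block_nonempty by (simp add: card_gt_0_iff)

lemma block_col_sum:
  assumes "j \<in> S"
  shows "(\<Sum>i\<in>S. a i j) = t"
proof -
  have "(\<Sum>i\<in>S. a i j) = (\<Sum>i\<in>S. a j i)"
    using assms block_subset by (intro sum.cong refl entries_sym) auto
  then show ?thesis using block_row_sum[OF assms] by simp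
qed

lemma row_sum_nonneg: "0 \<le> t"
proof -
  obtain i where "i \<in> S" using block_nonempty by blast
  then have "0 \<le> (\<Sum>j\<in>S. a i j)" using nonneg block_subset by (intro sum_nonneg) auto
  then show ?thesis using block_row_sum[OF \<open>i \<in> S\<close>] by simp
qed

lemma sum_split_block: "(\<Sum>j<N. f j) = (\<Sum>j\<in>S. f j) + (\<Sum>j\<in>{..<N} - S. f j)"
  using sum.subset_diff[OF block_subset, of f] by (simp add: add.commute)

lemma off_block_sum_eq:
  assumes "i \<in> S" "i' \<in> S"
  shows "(\<Sum>j\<in>{..<N} - S. a i j * v j) = (\<Sum>j\<in>{..<N} - S. a i' j * v j)"
proof (rule sum.cong[OF refl])
  fix j assume j: "j \<in> {..<N} - S"
  have "a i j = a j i" using assms j block_subset by (auto simp: entries_sym)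
  also have "\<dots> = a j i'" using assms j by (auto intro: uniform_off_block)
  also have "\<dots> = a i' j" using assms j block_subset by (auto simp: entries_sym)
  finally show "a i j * v j = a i' j * v j" by simp
qed

text \<open>Averaging over S commutes with the matrix: this is where equitability is used.\<close>
lemma mult_block_avg:
  assumes "i < N"
  shows "(\<Sum>j<N. a i j * block_avg S v j) = block_avg S (\<lambda>i. \<Sum>j<N. a i j * v j) i"
proof -
  define k where "k = real (card S)"
  define c where "c = (\<Sum>j\<in>S. v j) / k"
  have "0 < k" using card_block_pos by (simp add: k_def)
  have "(\<Sum>j\<in>S. a i j * block_avg S v j) = (\<Sum>j\<in>S. a i j) * c"
    unfolding sum_distrib_right by (intro sum.cong) (simp_all add: block_avg_def c_def k_def)
  moreover have "(\<Sum>j\<in>{..<N} - S. a i j * block_avg S v j) = (\<Sum>j\<in>{..<N} - S. a i j * v j)"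
    by (intro sum.cong) (simp_all add: block_avg_def)
  ultimately have split:
    "(\<Sum>j<N. a i j * block_avg S v j) = (\<Sum>j\<in>S. a i j) * c + (\<Sum>j\<in>{..<N} - S. a i j * v j)"
    by (simp add: sum_split_block[of "\<lambda>j. a i j * block_avg S v j"])
  show ?thesis
  proof (cases "i \<in> S")
    case True
    define r where "r = (\<Sum>j\<in>{..<N} - S. a i j * v j)"
    have "(\<Sum>i'\<in>S. \<Sum>j<N. a i' j * v j) =
        (\<Sum>i'\<in>S. (\<Sum>j\<in>S. a i' j * v j) + (\<Sum>j\<in>{..<N} - S. a i' j * v j))"
      by (intro sum.cong refl sum_split_block)
    also have "\<dots> = (\<Sum>i'\<in>S. \<Sum>j\<in>S. a i' j * v j) + (\<Sum>i'\<in>S. r)"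
      unfolding sum.distrib r_def by (intro arg_cong2[where f = "(+)"] sum.cong refl off_block_sum_eq True)
    also have "(\<Sum>i'\<in>S. r) = k * r" by (simp add: k_def)
    also have "(\<Sum>i'\<in>S. \<Sum>j\<in>S. a i' j * v j) = (\<Sum>j\<in>S. t * v j)"
      by (subst sum.swap) (simp add: sum_distrib_right[symmetric] block_col_sum)
    also have "\<dots> = t * (k * c)" using \<open>0 < k\<close> by (simp add: c_def flip: sum_distrib_left)
    finally have "(\<Sum>i'\<in>S. \<Sum>j<N. a i' j * v j) / k = t * c + r"
      using \<open>0 < k\<close> by (simp add: field_simps)
    then show ?thesis using True split block_row_sum[OF True] by (simp add: block_avg_def k_def r_def)
  next
    case False
    obtain j0 where "j0 \<in> S" using block_nonempty by blast
    have "(\<Sum>j\<in>S. a i j) * c = (\<Sum>j\<in>S. a i j0) * c"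
      using uniform_off_block[OF assms False _ \<open>j0 \<in> S\<close>] by simp
    also have "\<dots> = (\<Sum>j\<in>S. a i j0 * v j)"
      using \<open>0 < k\<close> by (simp add: c_def k_def flip: sum_distrib_left)
    also have "\<dots> = (\<Sum>j\<in>S. a i j * v j)"
      using uniform_off_block[OF assms False _ \<open>j0 \<in> S\<close>] by simp
    finally show ?thesis
      using False split sum_split_block[of "\<lambda>j. a i j * v j"] by (simp add: block_avg_def)
  qed
qed

lemma abs_eigval_le_if_vanishing_off_block:
  assumes v: "eigvec a N x v" and off: "\<And>i. i < N \<Longrightarrow> i \<notin> S \<Longrightarrow> v i = 0"
  shows "\<bar>x\<bar> \<le> t"
proof -
  define M where "M = Max ((\<lambda>j. \<bar>v j\<bar>) ` S)"
  have M_ge: "\<bar>v j\<bar> \<le> M" if "j \<in> S" for j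
    unfolding M_def using finite_block that by auto
  obtain i where "i \<in> S" "\<bar>v i\<bar> = M"
    unfolding M_def using finite_block block_nonempty
    by (metis (no_types, lifting) Max_in finite_imageI image_iff image_is_empty)
  obtain i' where "i' < N" "v i' \<noteq> 0" using v by (auto simp: eigvec_def)
  then have "0 < M" using M_ge[of i'] off by fastforce
  have "i < N" using \<open>i \<in> S\<close> block_subset by auto
  have "x * v i = (\<Sum>j\<in>S. a i j * v j)"
    using v \<open>i < N\<close> sum_split_block[of "\<lambda>j. a i j * v j"] off by (simp add: eigvec_def)
  then have "\<bar>x\<bar> * M = \<bar>\<Sum>j\<in>S. a i j * v j\<bar>" using \<open>\<bar>v i\<bar> = M\<close> by (metis abs_mult)
  also have "\<dots> \<le> (\<Sum>j\<in>S. a i j * M)"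
  proof (rule order_trans[OF sum_abs sum_mono])
    fix j assume "j \<in> S"
    then have "0 \<le> a i j" using nonneg \<open>i < N\<close> block_subset by auto
    then show "\<bar>a i j * v j\<bar> \<le> a i j * M"
      using M_ge[OF \<open>j \<in> S\<close>] by (simp add: abs_mult mult_left_mono)
  qed
  also have "\<dots> = t * M" using block_row_sum[OF \<open>i \<in> S\<close>] by (simp flip: sum_distrib_right)
  finally show ?thesis using \<open>0 < M\<close> by simp
qed

lemma eigvec_block_avg:
  assumes v: "eigvec a N x v" and "t < x"
  shows "eigvec a N x (block_avg S v)"
proof -
  have "\<exists>i<N. block_avg S v i \<noteq> 0"
  proof (rule ccontr)
    assume "\<not> ?thesis"
    then have "v i = 0" if "i < N" "i \<notin> S" for i
      using that by (auto simp: block_avg_def)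
    then have "\<bar>x\<bar> \<le> t" by (rule abs_eigval_le_if_vanishing_off_block[OF v])
    with \<open>t < x\<close> show False by simp
  qed
  moreover have "(\<Sum>j<N. a i j * block_avg S v j) = x * block_avg S v i" if "i < N" for i
  proof -
    have "(\<Sum>j<N. a i j * block_avg S v j) = block_avg S (\<lambda>i. \<Sum>j<N. a i j * v j) i"
      by (rule mult_block_avg[OF that])
    also have "\<dots> = block_avg S (\<lambda>i. x * v i) i"
      using v block_subset that by (auto simp: eigvec_def block_avg_def intro!: sum.cong)
    also have "\<dots> = x * block_avg S v i" by (simp add: block_avg_def sum_distrib_left)
    finally show ?thesis .
  qed
  ultimately show ?thesis by (simp add: eigvec_def)
qed

text \<open>Witness: the Rayleigh quotient of 1_S + z e_i0, with z = |S| b / (t + 1) and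
  b = a i0 j0, exceeds t.\<close>
lemma exists_eigval_above_row_sum:
  assumes i0: "i0 < N" "i0 \<notin> S" and "j0 \<in> S" and pos: "0 < a i0 j0"
  shows "\<exists>x>t. x \<in> eigvals a N"
proof -
  define k where "k = real (card S)"
  define b where "b = a i0 j0"
  define f where "f = (\<lambda>i. of_bool (i \<in> S) :: real)"
  define g where "g = (\<lambda>i. of_bool (i = i0) :: real)"
  define z where "z = k * b / (t + 1)"
  have "0 < k" using card_block_pos by (simp add: k_def)
  have "0 \<le> t" by (rule row_sum_nonneg)
  have "0 < k * b" using \<open>0 < k\<close> pos by (simp add: b_def)
  have "0 < z" using \<open>0 < k * b\<close> \<open>0 \<le> t\<close> by (simp add: z_def)
  have "bilin a N f f = (\<Sum>i\<in>S. \<Sum>j\<in>S. a i j)"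
    using block_subset by (simp add: bilin_def f_def mult.assoc Int_absorb1 flip: sum_distrib_left)
  also have "\<dots> = k * t" by (simp add: block_row_sum k_def)
  finally have ff: "bilin a N f f = k * t" .
  have "bilin a N f g = (\<Sum>i<N. of_bool (i \<in> S) * a i i0)"
    using i0 by (simp add: bilin_def f_def g_def mult.assoc flip: sum_distrib_left)
  also have "\<dots> = (\<Sum>i\<in>S. a i i0)" using block_subset by (simp add: Int_absorb1)
  also have "\<dots> = (\<Sum>i\<in>S. b)"
  proof (rule sum.cong[OF refl])
    fix i assume "i \<in> S"
    then have "a i i0 = a i0 i" using i0 block_subset by (auto intro: entries_sym)
    also have "\<dots> = b" using uniform_off_block[OF i0 \<open>i \<in> S\<close> \<open>j0 \<in> S\<close>] by (simp add: b_def)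
    finally show "a i i0 = b" .
  qed
  finally have fg: "bilin a N f g = k * b" by (simp add: k_def)
  have gf: "bilin a N g f = k * b" using fg bilin_commute[of N a g f] entries_sym by metis
  have gg: "bilin a N g g = a i0 i0"
    using i0 by (simp add: bilin_def g_def mult.assoc flip: sum_distrib_left)
  have "sqnorm N f = k" using block_subset by (simp add: sqnorm_def f_def k_def power2_eq_square Int_absorb1)
  moreover have "sqnorm N g = 1" using i0 by (simp add: sqnorm_def g_def power2_eq_square)
  moreover have "(\<Sum>i<N. f i * g i) = 0" using i0 by (simp add: f_def g_def)
  ultimately have norm: "sqnorm N (\<lambda>i. f i + z * g i) = k + z\<^sup>2"
    by (simp add: sqnorm_add_scaled)
  have "t * z < k * b"
    using \<open>0 < k * b\<close> \<open>0 \<le> t\<close> by (simp add: z_def field_simps)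
  then have "t * z\<^sup>2 < 2 * z * (k * b)"
    using \<open>0 < z\<close> \<open>0 < k * b\<close> by (simp add: power2_eq_square)
  moreover have "0 \<le> z\<^sup>2 * a i0 i0" using nonneg i0 by simp
  ultimately have "t * sqnorm N (\<lambda>i. f i + z * g i) < bilin a N (\<lambda>i. f i + z * g i) (\<lambda>i. f i + z * g i)"
    unfolding norm bilin_add_scaled ff fg gf gg by (simp add: algebra_simps)
  \<comment> \<open>without explicit a and N, unifying with entries_sym picks a spurious higher-order match\<close>
  from eigval_above_if_rayleigh_above[where a = a and N = N, OF entries_sym this] show ?thesis .
qed

lemma max_eigval_has_block_constant_eigvec:
  assumes "finite (eigvals a N)" "i0 < N" "i0 \<notin> S" "j0 \<in> S" "0 < a i0 j0"
  shows "\<exists>v. eigvec a N (Max (eigvals a N)) v \<and> (\<forall>i\<in>S. \<forall>j\<in>S. v i = v j)"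
proof -
  obtain y where "t < y" "y \<in> eigvals a N"
    using exists_eigval_above_row_sum[OF assms(2-5)] by blast
  then have "t < Max (eigvals a N)" "Max (eigvals a N) \<in> eigvals a N"
    using assms(1) by (auto intro: Max_in less_le_trans[OF _ Max_ge])
  then obtain v where "eigvec a N (Max (eigvals a N)) v" by (auto simp: eigvals_def)
  then have "eigvec a N (Max (eigvals a N)) (block_avg S v)"
    using eigvec_block_avg \<open>t < Max (eigvals a N)\<close> by blast
  then show ?thesis by (intro exI[of _ "block_avg S v"]) (simp add: block_avg_def)
qed

end

lemma eigvec_transfer:
  assumes "S \<subseteq> {..<N}"
    and agree: "\<And>i j. i < N \<Longrightarrow> j < N \<Longrightarrow> i \<notin> S \<or> j \<notin> S \<Longrightarrow> a1 i j = a2 i j"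
    and row_sum1: "\<And>i. i \<in> S \<Longrightarrow> (\<Sum>j\<in>S. a1 i j) = t"
    and row_sum2: "\<And>i. i \<in> S \<Longrightarrow> (\<Sum>j\<in>S. a2 i j) = t"
    and const: "\<forall>i\<in>S. \<forall>j\<in>S. v i = v j"
    and v: "eigvec a1 N x v"
  shows "eigvec a2 N x v"
proof -
  have "(\<Sum>j<N. a1 i j * v j) = (\<Sum>j<N. a2 i j * v j)" if "i < N" for i
  proof (cases "i \<in> S")
    case True
    have v_const: "v j = v i" if "j \<in> S" for j using const True that by blast
    have "(\<Sum>j\<in>S. a1 i j * v j) = (\<Sum>j\<in>S. a1 i j) * v i"
      unfolding sum_distrib_right by (intro sum.cong refl) (metis v_const)
    moreover have "(\<Sum>j\<in>S. a2 i j * v j) = (\<Sum>j\<in>S. a2 i j) * v i"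
      unfolding sum_distrib_right by (intro sum.cong refl) (metis v_const)
    moreover have "(\<Sum>j\<in>{..<N} - S. a1 i j * v j) = (\<Sum>j\<in>{..<N} - S. a2 i j * v j)"
      using that by (intro sum.cong) (auto simp: agree)
    ultimately show ?thesis
      using row_sum1[OF True] row_sum2[OF True] sum.subset_diff[OF assms(1), of "\<lambda>j. a1 i j * v j"]
        sum.subset_diff[OF assms(1), of "\<lambda>j. a2 i j * v j"] by simp
  next
    case False
    then show ?thesis using that by (intro sum.cong) (auto simp: agree)
  qed
  then show ?thesis using v by (simp add: eigvec_def)
qed

lemma Max_eigvals_eq_if_agree_off_block:
  assumes eq1: "equitable_block a1 N S t" and eq2: "equitable_block a2 N S t"
    and agree: "\<And>i j. i < N \<Longrightarrow> j < N \<Longrightarrow> i \<notin> S \<or> j \<notin> S \<Longrightarrow> a1 i j = a2 i j"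
    and fin1: "finite (eigvals a1 N)" and fin2: "finite (eigvals a2 N)"
    and p: "p < N" "p \<notin> S" and "q \<in> S" and pos: "0 < a1 p q"
  shows "Max (eigvals a1 N) = Max (eigvals a2 N)"
proof -
  interpret B1: equitable_block a1 N S t by (fact eq1)
  interpret B2: equitable_block a2 N S t by (fact eq2)
  have "0 < a2 p q" using pos agree[of p q] p \<open>q \<in> S\<close> B1.block_subset by auto
  obtain v1 where v1: "eigvec a1 N (Max (eigvals a1 N)) v1" "\<forall>i\<in>S. \<forall>j\<in>S. v1 i = v1 j"
    using B1.max_eigval_has_block_constant_eigvec[OF fin1 p \<open>q \<in> S\<close> pos] by blast
  obtain v2 where v2: "eigvec a2 N (Max (eigvals a2 N)) v2" "\<forall>i\<in>S. \<forall>j\<in>S. v2 i = v2 j"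
    using B2.max_eigval_has_block_constant_eigvec[OF fin2 p \<open>q \<in> S\<close> \<open>0 < a2 p q\<close>] by blast
  have "eigvec a2 N (Max (eigvals a1 N)) v1"
    using eigvec_transfer[OF B1.block_subset agree B1.block_row_sum B2.block_row_sum v1(2,1)] .
  then have "Max (eigvals a1 N) \<le> Max (eigvals a2 N)"
    using fin2 by (intro Max_ge) (auto simp: eigvals_def)
  moreover have "eigvec a1 N (Max (eigvals a2 N)) v2"
    using eigvec_transfer[OF B1.block_subset agree[symmetric] B2.block_row_sum B1.block_row_sum v2(2,1)] .
  then have "Max (eigvals a2 N) \<le> Max (eigvals a1 N)"
    using fin1 by (intro Max_ge) (auto simp: eigvals_def)
  ultimately show ?thesis by simp
qed

lemma eigenvalue_iff_eigvec:
  fixes M :: "real mat"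
  assumes M: "M \<in> carrier_mat N N"
  shows "eigenvalue M x \<longleftrightarrow> (\<exists>v. eigvec (\<lambda>i j. M $$ (i, j)) N x v)"
proof
  assume "eigenvalue M x"
  then obtain v where v: "v \<in> carrier_vec N" "v \<noteq> 0\<^sub>v N" "M *\<^sub>v v = x \<cdot>\<^sub>v v"
    unfolding eigenvalue_def eigenvector_def using M by auto
  have "\<exists>i<N. v $ i \<noteq> 0"
  proof (rule ccontr)
    assume "\<not> ?thesis"
    then have "v = 0\<^sub>v N" using v(1) by (intro eq_vecI) auto
    with v(2) show False ..
  qed
  moreover have "(\<Sum>j<N. M $$ (i, j) * v $ j) = x * v $ i" if "i < N" for i
  proof -
    have "(M *\<^sub>v v) $ i = (x \<cdot>\<^sub>v v) $ i" using v(3) by simp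
    then show ?thesis using that M v(1) by (simp add: scalar_prod_def row_def lessThan_atLeast0)
  qed
  ultimately show "\<exists>v. eigvec (\<lambda>i j. M $$ (i, j)) N x v" unfolding eigvec_def by blast
next
  assume "\<exists>w. eigvec (\<lambda>i j. M $$ (i, j)) N x w"
  then obtain w where w: "\<exists>i<N. w i \<noteq> 0" "\<forall>i<N. (\<Sum>j<N. M $$ (i, j) * w j) = x * w i"
    unfolding eigvec_def by auto
  define v where "v = Matrix.vec N w"
  have "v \<in> carrier_vec N" by (simp add: v_def)
  moreover have "v \<noteq> 0\<^sub>v N"
  proof
    assume "v = 0\<^sub>v N"
    then have "w i = 0" if "i < N" for i using that by (metis v_def index_vec index_zero_vec(1))
    with w(1) show False by auto
  qed
  moreover have "M *\<^sub>v v = x \<cdot>\<^sub>v v"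
    using M w(2) by (intro eq_vecI) (simp_all add: v_def scalar_prod_def row_def lessThan_atLeast0)
  ultimately show "eigenvalue M x" unfolding eigenvalue_def eigenvector_def using M by auto
qed

lemma finite_eigenvalues:
  fixes M :: "real mat"
  assumes "M \<in> carrier_mat N N"
  shows "finite {x. eigenvalue M x}"
proof -
  have "char_poly M \<noteq> 0" using degree_monic_char_poly[OF assms] by auto
  then have "finite {x. poly (char_poly M) x = 0}" by (rule poly_roots_finite)
  then show ?thesis using eigenvalue_root_char_poly[OF assms] by simp
qed

lemma lambda1_eq_Max_eigvals:
  fixes M :: "real mat"
  assumes "M \<in> carrier_mat N N"
  shows "lambda1 M = Max (eigvals (\<lambda>i j. M $$ (i, j)) N)"
  unfolding lambda1_def eigvals_def eigenvalue_iff_eigvec[OF assms] ..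

lemma finite_eigvals_mat:
  fixes M :: "real mat"
  assumes "M \<in> carrier_mat N N"
  shows "finite (eigvals (\<lambda>i j. M $$ (i, j)) N)"
  using finite_eigenvalues[OF assms] unfolding eigvals_def eigenvalue_iff_eigvec[OF assms] .

lemma lambda1_eq_if_agree_off_block:
  fixes M1 M2 :: "real mat"
  assumes M1: "M1 \<in> carrier_mat N N" and M2: "M2 \<in> carrier_mat N N"
    and "equitable_block (\<lambda>i j. M1 $$ (i, j)) N S t" "equitable_block (\<lambda>i j. M2 $$ (i, j)) N S t"
    and "\<And>i j. i < N \<Longrightarrow> j < N \<Longrightarrow> i \<notin> S \<or> j \<notin> S \<Longrightarrow> M1 $$ (i, j) = M2 $$ (i, j)"
    and "p < N" "p \<notin> S" "q \<in> S" "0 < M1 $$ (p, q)"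
  shows "lambda1 M1 = lambda1 M2"
  unfolding lambda1_eq_Max_eigvals[OF M1] lambda1_eq_Max_eigvals[OF M2]
  by (rule Max_eigvals_eq_if_agree_off_block) (use assms finite_eigvals_mat in auto)

lemma nverts_complete_graph [simp]: "nverts (complete_graph m) = m"
  by (simp add: nverts_def complete_graph_def)

lemma adj_complete_graph [simp]: "adj (complete_graph m) i j \<longleftrightarrow> i < m \<and> j < m \<and> i \<noteq> j"
  by (simp add: adj_def complete_graph_def)

lemma nverts_cycle_graph [simp]: "nverts (cycle_graph k) = k"
  by (simp add: nverts_def cycle_graph_def)

lemma nverts_disj_union [simp]: "nverts (disj_union G H) = nverts G + nverts H"
  by (simp add: nverts_def disj_union_def)

lemma adj_disj_union:
  "adj (disj_union G H) i j \<longleftrightarrow> (i < nverts G \<and> j < nverts G \<and> adj G i j) \<or>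
     (nverts G \<le> i \<and> nverts G \<le> j \<and> adj H (i - nverts G) (j - nverts G))"
  by (simp add: adj_def disj_union_def)

lemma nverts_graph_join [simp]: "nverts (graph_join G H) = nverts G + nverts H"
  by (simp add: nverts_def graph_join_def)

lemma adj_graph_join:
  "adj (graph_join G H) i j \<longleftrightarrow> adj (disj_union G H) i j \<or>
     (i < nverts G \<and> nverts G \<le> j \<and> j < nverts G + nverts H) \<or>
     (j < nverts G \<and> nverts G \<le> i \<and> i < nverts G + nverts H)"
  by (simp add: graph_join_def adj_def)

lemma simple_graph_adj_less:
  "simple_graph G \<Longrightarrow> adj G i j \<Longrightarrow> i < nverts G \<and> j < nverts G"
  by (simp add: simple_graph_def)

lemma simple_graph_adj_commute: "simple_graph G \<Longrightarrow> adj G i j \<longleftrightarrow> adj G j i"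
  unfolding simple_graph_def by blast

lemma simple_graph_not_adj_self: "simple_graph G \<Longrightarrow> \<not> adj G i i"
  unfolding simple_graph_def by blast

lemma simple_graphI:
  assumes "\<And>i j. adj G i j \<Longrightarrow> i < nverts G \<and> j < nverts G \<and> i \<noteq> j"
    and "\<And>i j. adj G i j \<Longrightarrow> adj G j i"
  shows "simple_graph G"
  using assms by (simp add: simple_graph_def)

lemma simple_graph_cycle_graph: "simple_graph (cycle_graph k)"
  by (rule simple_graphI) (auto simp: adj_def nverts_def cycle_graph_def)

lemma simple_graph_complete_graph: "simple_graph (complete_graph m)"
  by (rule simple_graphI) auto

lemma simple_graph_disj_union:
  assumes "simple_graph G" "simple_graph H"
  shows "simple_graph (disj_union G H)"
proof (rule simple_graphI)
  fix i j assume "adj (disj_union G H) i j"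
  then show "i < nverts (disj_union G H) \<and> j < nverts (disj_union G H) \<and> i \<noteq> j"
    using simple_graph_adj_less[OF assms(1), of i j] simple_graph_not_adj_self[OF assms(1), of i]
      simple_graph_adj_less[OF assms(2), of "i - nverts G" "j - nverts G"]
      simple_graph_not_adj_self[OF assms(2), of "i - nverts G"] by (auto simp: adj_disj_union)
next
  fix i j assume "adj (disj_union G H) i j"
  then show "adj (disj_union G H) j i"
    using simple_graph_adj_commute[OF assms(1), of i j]
      simple_graph_adj_commute[OF assms(2), of "i - nverts G" "j - nverts G"]
    by (auto simp: adj_disj_union)
qed

lemma simple_graph_graph_join:
  assumes "simple_graph G" "simple_graph H"
  shows "simple_graph (graph_join G H)"
proof (rule simple_graphI)
  fix i j assume "adj (graph_join G H) i j"
  then show "i < nverts (graph_join G H) \<and> j < nverts (graph_join G H) \<and> i \<noteq> j"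
    using simple_graph_adj_less[OF simple_graph_disj_union[OF assms], of i j]
      simple_graph_not_adj_self[OF simple_graph_disj_union[OF assms], of i] by (auto simp: adj_graph_join)
next
  fix i j assume "adj (graph_join G H) i j"
  then show "adj (graph_join G H) j i"
    using simple_graph_adj_commute[OF simple_graph_disj_union[OF assms], of i j]
    by (auto simp: adj_graph_join)
qed

definition regular :: "nat \<Rightarrow> graph \<Rightarrow> bool" where
  "regular d G \<longleftrightarrow> (\<forall>i<nverts G. degree G i = d)"

lemma adj_cycle_graph:
  assumes "p < k" "q < k" "3 \<le> k"
  shows "adj (cycle_graph k) p q \<longleftrightarrow>
    q = (if p = k - 1 then 0 else p + 1) \<or> q = (if p = 0 then k - 1 else p - 1)"
proof -
  have succ: "Suc r mod k = (if r = k - 1 then 0 else r + 1)" if "r < k" for r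
    using that by (auto simp: mod_if)
  show ?thesis
    using assms succ[OF \<open>p < k\<close>] succ[OF \<open>q < k\<close>] by (auto simp: adj_def cycle_graph_def)
qed

lemma regular_cycle_graph: "3 \<le> k \<Longrightarrow> regular 2 (cycle_graph k)"
proof -
  assume "3 \<le> k"
  have "degree (cycle_graph k) p = 2" if "p < k" for p
  proof -
    define s where "s = (if p = k - 1 then 0 else p + 1)"
    define r where "r = (if p = 0 then k - 1 else p - 1)"
    have "{q. q < k \<and> adj (cycle_graph k) p q} = {s, r}"
      using that \<open>3 \<le> k\<close> adj_cycle_graph[OF that _ \<open>3 \<le> k\<close>] by (auto simp: s_def r_def)
    moreover have "s \<noteq> r" using that \<open>3 \<le> k\<close> by (auto simp: s_def r_def)
    ultimately show ?thesis by (simp add: degree_def)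
  qed
  then show ?thesis by (simp add: regular_def)
qed

lemma degree_disj_union_left:
  assumes "simple_graph G" "i < nverts G"
  shows "degree (disj_union G H) i = degree G i"
proof -
  have "{j. j < nverts G + nverts H \<and> adj (disj_union G H) i j} = {j. j < nverts G \<and> adj G i j}"
    using assms simple_graph_adj_less[OF assms(1), of i] by (auto simp: adj_disj_union intro: trans_less_add1)
  then show ?thesis by (simp add: degree_def)
qed

lemma degree_disj_union_right:
  assumes "simple_graph H" "nverts G \<le> i"
  shows "degree (disj_union G H) i = degree H (i - nverts G)"
proof -
  have "{j. j < nverts G + nverts H \<and> adj (disj_union G H) i j} =
      (\<lambda>q. q + nverts G) ` {q. q < nverts H \<and> adj H (i - nverts G) q}"
  proof (intro equalityI subsetI)
    fix j assume "j \<in> {j. j < nverts G + nverts H \<and> adj (disj_union G H) i j}"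
    then show "j \<in> (\<lambda>q. q + nverts G) ` {q. q < nverts H \<and> adj H (i - nverts G) q}"
      using assms by (auto simp: adj_disj_union intro!: image_eqI[of _ _ "j - nverts G"])
  qed (use assms in \<open>auto simp: adj_disj_union\<close>)
  then show ?thesis by (simp add: degree_def card_image)
qed

lemma regular_disj_union:
  assumes "simple_graph G" "simple_graph H" "regular d G" "regular d H"
  shows "regular d (disj_union G H)"
  unfolding regular_def
proof (intro allI impI)
  fix i assume "i < nverts (disj_union G H)"
  then show "degree (disj_union G H) i = d"
    using assms by (cases "i < nverts G")
      (simp_all add: regular_def degree_disj_union_left degree_disj_union_right)
qed

section \<open>Joins with a complete graph\<close>

lemma adj_join_complete:
  "adj (graph_join (complete_graph m) Y) i j \<longleftrightarrow>
    (i < m \<and> j < m \<and> i \<noteq> j) \<or> (i < m \<and> m \<le> j \<and> j < m + nverts Y) \<or>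
    (j < m \<and> m \<le> i \<and> i < m + nverts Y) \<or> (m \<le> i \<and> m \<le> j \<and> adj Y (i - m) (j - m))"
  by (auto simp: adj_graph_join adj_disj_union)

lemma adj_join_union_block:
  assumes "i \<in> {m..<m + nverts X}"
  shows "adj (graph_join (complete_graph m) (disj_union X H)) i j \<longleftrightarrow>
    j < m \<or> (j \<in> {m..<m + nverts X} \<and> adj X (i - m) (j - m))"
proof -
  have "m \<le> i" "i - m < nverts X" "i < m + (nverts X + nverts H)" using assms by auto
  then show ?thesis unfolding adj_join_complete adj_disj_union by auto
qed

lemma adj_join_union_off_block:
  assumes "i < m + (nverts X + nverts H)" "i \<notin> {m..<m + nverts X}" "j \<in> {m..<m + nverts X}"
  shows "adj (graph_join (complete_graph m) (disj_union X H)) i j \<longleftrightarrow> i < m"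
proof -
  have "m \<le> j" "j - m < nverts X" "i < m \<or> nverts X \<le> i - m" using assms by auto
  then show ?thesis using assms(1) unfolding adj_join_complete adj_disj_union by auto
qed

lemma adj_join_union_cong:
  assumes "nverts X1 = nverts X2" "i \<notin> {m..<m + nverts X2} \<or> j \<notin> {m..<m + nverts X2}"
  shows "adj (graph_join (complete_graph m) (disj_union X1 H)) i j \<longleftrightarrow>
    adj (graph_join (complete_graph m) (disj_union X2 H)) i j"
proof -
  have "\<not> (i - m < nverts X2 \<and> j - m < nverts X2) \<or> i < m \<or> j < m" using assms(2) by auto
  then show ?thesis using assms(1) unfolding adj_join_complete adj_disj_union by auto
qed

lemma block_nbrs_join_union:
  assumes "i \<in> {m..<m + nverts X}"
  shows "{j \<in> {m..<m + nverts X}. adj (graph_join (complete_graph m) (disj_union X H)) i j} =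
    (\<lambda>q. q + m) ` {q. q < nverts X \<and> adj X (i - m) q}"
proof (intro equalityI subsetI)
  fix j assume "j \<in> {j \<in> {m..<m + nverts X}. adj (graph_join (complete_graph m) (disj_union X H)) i j}"
  then have "j \<in> {m..<m + nverts X}" "adj X (i - m) (j - m)"
    using adj_join_union_block[OF assms, of H j] by auto
  then show "j \<in> (\<lambda>q. q + m) ` {q. q < nverts X \<and> adj X (i - m) q}"
    by (intro image_eqI[of _ _ "j - m"]) auto
next
  fix j assume "j \<in> (\<lambda>q. q + m) ` {q. q < nverts X \<and> adj X (i - m) q}"
  then obtain q where "j = q + m" "q < nverts X" "adj X (i - m) q" by blast
  then show "j \<in> {j \<in> {m..<m + nverts X}. adj (graph_join (complete_graph m) (disj_union X H)) i j}"
    using adj_join_union_block[OF assms, of H j] by simp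
qed

lemma card_block_nbrs_join_union:
  assumes "i \<in> {m..<m + nverts X}"
  shows "card {j \<in> {m..<m + nverts X}. adj (graph_join (complete_graph m) (disj_union X H)) i j} =
    degree X (i - m)"
  unfolding block_nbrs_join_union[OF assms] by (simp add: card_image degree_def)

lemma degree_join_union_block:
  assumes "i \<in> {m..<m + nverts X}"
  shows "degree (graph_join (complete_graph m) (disj_union X H)) i = m + degree X (i - m)"
proof -
  let ?G = "graph_join (complete_graph m) (disj_union X H)"
  have "{j. j < nverts ?G \<and> adj ?G i j} = {..<m} \<union> {j \<in> {m..<m + nverts X}. adj ?G i j}"
    by (auto simp: adj_join_union_block[OF assms])
  then have "degree ?G i = card ({..<m} \<union> {j \<in> {m..<m + nverts X}. adj ?G i j})"
    by (simp add: degree_def)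
  also have "\<dots> = m + card {j \<in> {m..<m + nverts X}. adj ?G i j}"
    by (subst card_Un_disjoint) auto
  finally show ?thesis using card_block_nbrs_join_union[OF assms, of H] by simp
qed

lemma degree_join_union_cong:
  assumes "nverts X1 = nverts X2" "i \<notin> {m..<m + nverts X2}"
  shows "degree (graph_join (complete_graph m) (disj_union X1 H)) i =
    degree (graph_join (complete_graph m) (disj_union X2 H)) i"
proof -
  have "{j. j < m + (nverts X2 + nverts H) \<and> adj (graph_join (complete_graph m) (disj_union X1 H)) i j} =
      {j. j < m + (nverts X2 + nverts H) \<and> adj (graph_join (complete_graph m) (disj_union X2 H)) i j}"
    using adj_join_union_cong[OF assms(1)] assms(2) by blast
  then show ?thesis by (simp add: degree_def assms(1))
qed

lemma A_alpha_carrier: "A_alpha \<alpha> G \<in> carrier_mat (nverts G) (nverts G)"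
  by (simp add: A_alpha_def)

lemma A_alpha_index:
  assumes "i < nverts G" "j < nverts G"
  shows "A_alpha \<alpha> G $$ (i, j) =
    (if i = j then \<alpha> * real (degree G i) else 0) + (1 - \<alpha>) * (if adj G i j then 1 else 0)"
  using assms by (simp add: A_alpha_def)

lemma A_alpha_one_eq:
  assumes "nverts G1 = nverts G2" "\<And>i. degree G1 i = degree G2 i"
  shows "A_alpha 1 G1 = A_alpha 1 G2"
  using assms by (intro eq_matI) (simp_all add: A_alpha_def)

lemma equitable_block_A_alpha:
  assumes G: "simple_graph G" and "0 \<le> \<alpha>" "\<alpha> \<le> 1"
    and "S \<subseteq> {..<nverts G}" "S \<noteq> {}"
    and deg: "\<And>i. i \<in> S \<Longrightarrow> degree G i = d"
    and nbrs: "\<And>i. i \<in> S \<Longrightarrow> card {j \<in> S. adj G i j} = e"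
    and uniform: "\<And>i j j'. i < nverts G \<Longrightarrow> i \<notin> S \<Longrightarrow> j \<in> S \<Longrightarrow> j' \<in> S \<Longrightarrow> adj G i j \<longleftrightarrow> adj G i j'"
  shows "equitable_block (\<lambda>i j. A_alpha \<alpha> G $$ (i, j)) (nverts G) S (\<alpha> * d + (1 - \<alpha>) * e)"
proof
  fix i j assume "i < nverts G" "j < nverts G"
  then show "A_alpha \<alpha> G $$ (i, j) = A_alpha \<alpha> G $$ (j, i)"
    by (simp add: A_alpha_index simple_graph_adj_commute[OF G])
next
  fix i j assume "i < nverts G" "j < nverts G"
  then show "0 \<le> A_alpha \<alpha> G $$ (i, j)" using \<open>0 \<le> \<alpha>\<close> \<open>\<alpha> \<le> 1\<close> by (simp add: A_alpha_index)
next
  fix i assume "i \<in> S"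
  then have "(\<Sum>j\<in>S. A_alpha \<alpha> G $$ (i, j)) =
      (\<Sum>j\<in>S. (if i = j then \<alpha> * real (degree G i) else 0) + (1 - \<alpha>) * of_bool (adj G i j))"
    using \<open>S \<subseteq> {..<nverts G}\<close> by (intro sum.cong) (auto simp: A_alpha_index subset_iff)
  also have "\<dots> = \<alpha> * real (degree G i) + (1 - \<alpha>) * real (card {j \<in> S. adj G i j})"
    using \<open>i \<in> S\<close> \<open>S \<subseteq> {..<nverts G}\<close> finite_subset[OF \<open>S \<subseteq> {..<nverts G}\<close>]
    by (simp add: sum.distrib flip: sum_distrib_left) (simp add: Collect_conj_eq Int_commute)
  finally show "(\<Sum>j\<in>S. A_alpha \<alpha> G $$ (i, j)) = \<alpha> * d + (1 - \<alpha>) * e"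
    using deg[OF \<open>i \<in> S\<close>] nbrs[OF \<open>i \<in> S\<close>] by simp
next
  fix i j j' assume "i < nverts G" "i \<notin> S" "j \<in> S" "j' \<in> S"
  then show "A_alpha \<alpha> G $$ (i, j) = A_alpha \<alpha> G $$ (i, j')"
    using \<open>S \<subseteq> {..<nverts G}\<close> uniform[of i j j'] by (auto simp: A_alpha_index subset_iff)
qed (use assms in auto)

lemma equitable_block_A_alpha_join_union:
  assumes "0 \<le> \<alpha>" "\<alpha> \<le> 1" "simple_graph X" "regular d X" "0 < nverts X" "simple_graph H"
  shows "equitable_block (\<lambda>i j. A_alpha \<alpha> (graph_join (complete_graph m) (disj_union X H)) $$ (i, j))
    (m + (nverts X + nverts H)) {m..<m + nverts X} (\<alpha> * real (m + d) + (1 - \<alpha>) * real d)"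
proof -
  let ?G = "graph_join (complete_graph m) (disj_union X H)"
  have "equitable_block (\<lambda>i j. A_alpha \<alpha> ?G $$ (i, j)) (nverts ?G) {m..<m + nverts X}
    (\<alpha> * real (m + d) + (1 - \<alpha>) * real d)"
  proof (rule equitable_block_A_alpha)
    show "simple_graph ?G"
      by (intro simple_graph_graph_join simple_graph_complete_graph simple_graph_disj_union assms)
    show "degree ?G i = m + d" if "i \<in> {m..<m + nverts X}" for i
      using that assms(4) by (auto simp: degree_join_union_block regular_def)
    show "card {j \<in> {m..<m + nverts X}. adj ?G i j} = d" if "i \<in> {m..<m + nverts X}" for i
    proof -
      have "i - m < nverts X" using that by auto
      then show ?thesis using assms(4) card_block_nbrs_join_union[OF that, of H] by (simp add: regular_def)
    qed
    show "adj ?G i j \<longleftrightarrow> adj ?G i j'"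
      if "i < nverts ?G" "i \<notin> {m..<m + nverts X}" "j \<in> {m..<m + nverts X}" "j' \<in> {m..<m + nverts X}"
      for i j j'
      using that adj_join_union_off_block[of i m X H] by simp
  qed (use assms in auto)
  then show ?thesis by simp
qed

theorem lambda1_A_alpha_join_regular_eq:
  assumes "0 \<le> \<alpha>" "\<alpha> \<le> 1" "0 < m"
    and X1: "simple_graph X1" "regular d X1" and X2: "simple_graph X2" "regular d X2"
    and same_order: "nverts X1 = nverts X2" and "0 < nverts X2" and H: "simple_graph H"
  shows "lambda1 (A_alpha \<alpha> (graph_join (complete_graph m) (disj_union X1 H))) =
    lambda1 (A_alpha \<alpha> (graph_join (complete_graph m) (disj_union X2 H)))"
proof -
  define G1 where "G1 = graph_join (complete_graph m) (disj_union X1 H)"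
  define G2 where "G2 = graph_join (complete_graph m) (disj_union X2 H)"
  define N where "N = m + (nverts X2 + nverts H)"
  define S where "S = {m..<m + nverts X2}"
  have nverts: "nverts G1 = N" "nverts G2 = N"
    by (simp_all add: G1_def G2_def N_def same_order)
  have simple: "simple_graph G1" "simple_graph G2"
    unfolding G1_def G2_def
    by (intro simple_graph_graph_join simple_graph_complete_graph simple_graph_disj_union X1 X2 H)+
  have deg_block: "degree G1 i = m + d" "degree G2 i = m + d" if "i \<in> S" for i
    using that X1(2) X2(2) same_order
    by (auto simp: G1_def G2_def S_def degree_join_union_block regular_def)
  have deg: "degree G1 i = degree G2 i" for i
    using deg_block degree_join_union_cong[OF same_order] by (cases "i \<in> S") (auto simp: G1_def G2_def S_def)
  have agree: "A_alpha \<alpha> G1 $$ (i, j) = A_alpha \<alpha> G2 $$ (i, j)"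
    if "i < N" "j < N" "i \<notin> S \<or> j \<notin> S" for i j
    using that deg adj_join_union_cong[OF same_order, of i m j H, folded G1_def G2_def]
    by (simp add: A_alpha_index nverts S_def)
  show ?thesis
  proof (cases "\<alpha> = 1")
    case True
    then show ?thesis using A_alpha_one_eq[of G1 G2] nverts deg by (simp add: G1_def G2_def)
  next
    case False
    define t where "t = \<alpha> * real (m + d) + (1 - \<alpha>) * real d"
    have eq1: "equitable_block (\<lambda>i j. A_alpha \<alpha> G1 $$ (i, j)) N S t"
      and eq2: "equitable_block (\<lambda>i j. A_alpha \<alpha> G2 $$ (i, j)) N S t"
      unfolding t_def N_def S_def G1_def G2_def
      using equitable_block_A_alpha_join_union[OF assms(1,2) X1 _ H, of m]
        equitable_block_A_alpha_join_union[OF assms(1,2) X2 \<open>0 < nverts X2\<close> H, of m]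
        same_order \<open>0 < nverts X2\<close> by simp_all
    have "adj G1 0 m"
      using \<open>0 < m\<close> \<open>0 < nverts X2\<close> same_order adj_join_union_off_block[of 0 m X1 H m]
      by (simp add: G1_def)
    then have "0 < A_alpha \<alpha> G1 $$ (0, m)"
      using \<open>0 < m\<close> \<open>0 < nverts X2\<close> \<open>\<alpha> \<le> 1\<close> False by (simp add: A_alpha_index nverts N_def)
    then have "lambda1 (A_alpha \<alpha> G1) = lambda1 (A_alpha \<alpha> G2)"
      using \<open>0 < m\<close> \<open>0 < nverts X2\<close>
      by (intro lambda1_eq_if_agree_off_block[OF A_alpha_carrier[of \<alpha> G1, unfolded nverts]
          A_alpha_carrier[of \<alpha> G2, unfolded nverts] eq1 eq2 agree, where p = 0 and q = m])
        (auto simp: N_def S_def)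
    then show ?thesis by (simp add: G1_def G2_def)
  qed
qed

theorem mainTheorem17:
  fixes \<alpha> :: real and m n n1 n2 :: nat and H1 :: graph
  assumes "0 \<le> \<alpha>" "\<alpha> \<le> 1" "m \<ge> 1" "n1 \<ge> 3" "n2 \<ge> 3"
    and "simple_graph H1" "n1 + n2 \<le> n" "nverts H1 = n - n1 - n2"
  shows "lambda1 (A_alpha \<alpha> (graph_join (complete_graph m)
            (disj_union (disj_union (cycle_graph n1) (cycle_graph n2)) H1)))
       = lambda1 (A_alpha \<alpha> (graph_join (complete_graph m)
            (disj_union (cycle_graph (n1 + n2)) H1)))"
proof (rule lambda1_A_alpha_join_regular_eq)
  show "regular 2 (disj_union (cycle_graph n1) (cycle_graph n2))"
    using assms by (intro regular_disj_union regular_cycle_graph simple_graph_cycle_graph) auto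
  show "regular 2 (cycle_graph (n1 + n2))"
    using assms by (intro regular_cycle_graph) auto
qed (use assms in \<open>auto intro: simple_graph_disj_union simple_graph_cycle_graph\<close>)

end
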